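(* Let $H=(W,F)$ be a simple undirected graph with a designated root $r_1\in W$ and a set of terminals $S=\{s_1,\dots,s_k\}\subseteq W\setminus\{r_1\}$ with $k\ge 2$, such that no edge of $H$ joins two terminals. Let $H'$, $H'_1$, $H'_2$, $M_1$, $M_2$ and $g$ be as defined in the context. Then for every $S$-wide spanning tree $T$ of $H$ there exists a set $J\subseteq F'$ that is a basis of both $M_1$ and $M_2$ with $g(J)=T$.
   Context: A spanning tree $T$ of $H$ is $S$-wide if every connected component of $T-r_1$ contains at most one terminal. $H'=(W',F')$ is obtained from $H$ by adding $k-1$ new vertices $r_2,\dots,r_k$ and, for each edge $r_1x\in F$ and each $i\in\{2,\dots,k\}$, a new edge $r_ix$. $H'_1$ is the multigraph obtained from $H'$ by identifying $r_1,\dots,r_k$ into a single vertex (keeping parallel edges), and $H'_2$ is the multigraph obtained from $H'$ by identifying $s_1,\dots,s_k$ into a single vertex (keeping parallel edges and loops); both have edge set $F'$. $M_1$ and $M_2$ are the graphic matroids of $H'_1$ and $H'_2$ on ground set $F'$. Define $f:F'\to F$ by $f(xy)=r_1y$ if $x\in\{r_1,\dots,r_k\}$, $f(xy)=xr_1$ if $y\in\{r_1,\dots,r_k\}$, and $f(xy)=xy$ otherwise; for $J\subseteq F'$, $g(J)=\{f(e):e\in J\}$ (an edge set of $H$). *)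

theory Defs
  imports Main
begin

text \<open>Multigraphs are given by an edge ground set together with an endpoint map
  ends :: 'e => 'v set (ends e = {u,v}; a loop has ends e = {u}).\<close>

definition is_walk :: "('e \<Rightarrow> 'v set) \<Rightarrow> 'e list \<Rightarrow> 'v list \<Rightarrow> bool" where
  "is_walk ends es vs \<longleftrightarrow> length vs = Suc (length es) \<and>
     (\<forall>i<length es. ends (es ! i) = {vs ! i, vs ! Suc i})"

definition reach :: "('e \<Rightarrow> 'v set) \<Rightarrow> 'e set \<Rightarrow> 'v \<Rightarrow> 'v \<Rightarrow> bool" where
  "reach ends E u v \<longleftrightarrow> (\<exists>es vs. set es \<subseteq> E \<and> is_walk ends es vs \<and> hd vs = u \<and> last vs = v)"

text \<open>No cycle: no nonempty closed walk with pairwise distinct edges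
  (this covers loops and pairs of parallel edges).\<close>
definition acyclic_edges :: "('e \<Rightarrow> 'v set) \<Rightarrow> 'e set \<Rightarrow> bool" where
  "acyclic_edges ends J \<longleftrightarrow> \<not> (\<exists>es vs. es \<noteq> [] \<and> distinct es \<and> set es \<subseteq> J \<and>
        is_walk ends es vs \<and> hd vs = last vs)"

definition graphic_indep :: "('e \<Rightarrow> 'v set) \<Rightarrow> 'e set \<Rightarrow> 'e set \<Rightarrow> bool" where
  "graphic_indep ends E J \<longleftrightarrow> J \<subseteq> E \<and> acyclic_edges ends J"

definition graphic_basis :: "('e \<Rightarrow> 'v set) \<Rightarrow> 'e set \<Rightarrow> 'e set \<Rightarrow> bool" where
  "graphic_basis ends E J \<longleftrightarrow> graphic_indep ends E J \<and>
     (\<forall>e\<in>E - J. \<not> graphic_indep ends E (insert e J))"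

definition simple_graph :: "'a set \<Rightarrow> 'a set set \<Rightarrow> bool" where
  "simple_graph W F \<longleftrightarrow> finite W \<and> (\<forall>e\<in>F. e \<subseteq> W \<and> card e = 2)"

definition spanning_tree :: "'a set \<Rightarrow> 'a set set \<Rightarrow> 'a set set \<Rightarrow> bool" where
  "spanning_tree W F T \<longleftrightarrow> T \<subseteq> F \<and> acyclic_edges id T \<and>
     (\<forall>u\<in>W. \<forall>v\<in>W. reach id T u v)"

definition S_wide :: "'a \<Rightarrow> 'a set \<Rightarrow> 'a set set \<Rightarrow> bool" where
  "S_wide r1 S T \<longleftrightarrow> (\<forall>a\<in>S. \<forall>b\<in>S. a \<noteq> b \<longrightarrow> \<not> reach id {e\<in>T. r1 \<notin> e} a b)"

text \<open>H' : new vertices r 2, ..., r k, and edge {r i, x} for each edge {r 1, x} of H.\<close>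
definition Fprime :: "(nat \<Rightarrow> 'a) \<Rightarrow> nat \<Rightarrow> 'a set set \<Rightarrow> 'a set set" where
  "Fprime r k F = F \<union> {{r i, x} | i x. i \<in> {2..k} \<and> {r 1, x} \<in> F}"

text \<open>Identification of r 1..r k (for H'_1), resp. s 1..s k (for H'_2).\<close>
definition ident :: "(nat \<Rightarrow> 'a) \<Rightarrow> nat \<Rightarrow> 'a \<Rightarrow> 'a" where
  "ident t k v = (if v \<in> t ` {1..k} then t 1 else v)"

definition f_map :: "(nat \<Rightarrow> 'a) \<Rightarrow> nat \<Rightarrow> 'a set \<Rightarrow> 'a set" where
  "f_map r k e = ident r k ` e"

definition g_map :: "(nat \<Rightarrow> 'a) \<Rightarrow> nat \<Rightarrow> 'a set set \<Rightarrow> 'a set set" where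
  "g_map r k J = f_map r k ` J"

end

theory Submission
  imports Defs
begin

text \<open>Redirect every root edge \<open>r\<^sub>1x\<close> of \<open>T\<close> to \<open>r\<^sub>ix\<close>, where \<open>s\<^sub>i\<close> is the unique
  terminal in the component of \<open>x\<close> in \<open>T - r\<^sub>1\<close> (keep \<open>r\<^sub>1x\<close> if that component has no
  terminal). Identifying the copies of the root maps this lifted tree \<open>J\<close> bijectively onto
  \<open>T\<close>, so \<open>J\<close> is a basis of \<open>M\<^sub>1\<close>. In \<open>H'\<close> itself \<open>J\<close> is a forest in which \<open>r\<^sub>i\<close> is
  joined to \<open>s\<^sub>i\<close>, every vertex is joined to some terminal and, by \<open>S\<close>-wideness, distinct
  terminals lie in distinct components. Identifying the terminals therefore turns \<open>J\<close>
  into a spanning tree of \<open>H'\<^sub>2\<close>, i.e. a basis of \<open>M\<^sub>2\<close>.\<close>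

section \<open>Walks and reachability\<close>

lemma is_walk_Nil: "is_walk ends [] vs \<longleftrightarrow> (\<exists>v. vs = [v])"
  by (auto simp: is_walk_def length_Suc_conv)

lemma is_walk_Cons: "is_walk ends (e # es) vs \<longleftrightarrow>
  (\<exists>v vs'. vs = v # vs' \<and> ends e = {v, hd vs'} \<and> is_walk ends es vs')"
proof
  assume "is_walk ends (e # es) vs"
  then obtain v vs' where vs: "vs = v # vs'" and len: "length vs' = Suc (length es)"
    and steps: "\<forall>i<Suc (length es). ends ((e # es) ! i) = {vs ! i, vs ! Suc i}"
    by (auto simp: is_walk_def length_Suc_conv)
  have "ends e = {v, hd vs'}"
    using steps[rule_format, of 0] vs len by (cases vs') auto
  moreover have "is_walk ends es vs'"
    using steps len vs by (auto simp: is_walk_def)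
  ultimately show "\<exists>v vs'. vs = v # vs' \<and> ends e = {v, hd vs'} \<and> is_walk ends es vs'"
    using vs by blast
next
  assume "\<exists>v vs'. vs = v # vs' \<and> ends e = {v, hd vs'} \<and> is_walk ends es vs'"
  then obtain v vs' where vs: "vs = v # vs'" and e: "ends e = {v, hd vs'}"
    and walk: "is_walk ends es vs'"
    by blast
  have "hd vs' = vs' ! 0"
    using walk by (cases vs') (auto simp: is_walk_def)
  then show "is_walk ends (e # es) vs"
    using vs e walk by (auto simp: is_walk_def All_less_Suc2)
qed

lemma is_walk_nonempty: "is_walk ends es vs \<Longrightarrow> vs \<noteq> []"
  by (auto simp: is_walk_def)

lemma is_walk_append:
  "is_walk ends es1 vs1 \<Longrightarrow> is_walk ends es2 vs2 \<Longrightarrow> last vs1 = hd vs2 \<Longrightarrow>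
   is_walk ends (es1 @ es2) (vs1 @ tl vs2)"
proof (induction es1 arbitrary: vs1)
  case Nil
  then show ?case
    using is_walk_nonempty[OF Nil(2)] by (auto simp: is_walk_Nil)
next
  case (Cons e es1)
  then obtain v vs' where vs1: "vs1 = v # vs'" and e: "ends e = {v, hd vs'}"
    and walk: "is_walk ends es1 vs'"
    by (auto simp: is_walk_Cons)
  have "vs' \<noteq> []"
    using is_walk_nonempty[OF walk] .
  moreover have "is_walk ends (es1 @ es2) (vs' @ tl vs2)"
    using Cons.IH[OF walk Cons.prems(2)] Cons.prems(3) vs1 calculation by simp
  ultimately show ?case
    using vs1 e by (auto simp: is_walk_Cons)
qed

lemma is_walk_rev: "is_walk ends es vs \<Longrightarrow> is_walk ends (rev es) (rev vs)"
proof (induction es arbitrary: vs)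
  case Nil
  then show ?case by (auto simp: is_walk_Nil)
next
  case (Cons e es)
  then obtain v vs' where vs: "vs = v # vs'" and e: "ends e = {v, hd vs'}"
    and walk: "is_walk ends es vs'"
    by (auto simp: is_walk_Cons)
  have "is_walk ends [e] [hd vs', v]"
    using e by (auto simp: is_walk_Cons is_walk_Nil insert_commute)
  then have "is_walk ends (rev es @ [e]) (rev vs' @ tl [hd vs', v])"
    using is_walk_append[OF Cons.IH[OF walk], of "[e]" "[hd vs', v]"] is_walk_nonempty[OF walk]
    by (simp add: last_rev)
  then show ?case
    using vs by simp
qed

lemma is_walk_drop:
  "is_walk ends es vs \<Longrightarrow> p < length vs \<Longrightarrow> is_walk ends (drop p es) (drop p vs)"
  by (auto simp: is_walk_def add.commute)

lemma is_walk_map_vertices: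
  "is_walk ends es vs \<Longrightarrow> (\<And>e. ends' e = q ` ends e) \<Longrightarrow> is_walk ends' es (map q vs)"
  by (auto simp: is_walk_def)

lemma is_walk_map_edges:
  "is_walk ends es vs \<Longrightarrow> (\<And>e. e \<in> set es \<Longrightarrow> ends' (\<phi> e) = ends e) \<Longrightarrow>
   is_walk ends' (map \<phi> es) vs"
  by (auto simp: is_walk_def)

lemma is_walk_distinct_edges:
  "is_walk ends es vs \<Longrightarrow> distinct vs \<Longrightarrow> distinct es"
proof (induction es arbitrary: vs)
  case Nil
  then show ?case by simp
next
  case (Cons e es)
  then obtain v vs' where vs: "vs = v # vs'" and e: "ends e = {v, hd vs'}"
    and walk: "is_walk ends es vs'"
    by (auto simp: is_walk_Cons)
  have "e \<notin> set es"
  proof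
    assume "e \<in> set es"
    then obtain j where j: "j < length es" "es ! j = e"
      by (auto simp: in_set_conv_nth)
    then have "v \<in> {vs' ! j, vs' ! Suc j}" and "Suc j < length vs'"
      using walk e by (auto simp: is_walk_def)
    then have "v \<in> set vs'"
      by auto
    then show False
      using Cons.prems vs by simp
  qed
  then show ?case
    using Cons.IH[OF walk] Cons.prems vs by simp
qed

lemma is_walk_shortcut:
  assumes "is_walk ends es vs" "set es \<subseteq> E"
  shows "\<exists>es' vs'. set es' \<subseteq> E \<and> is_walk ends es' vs' \<and> hd vs' = hd vs \<and>
    last vs' = last vs \<and> distinct vs'"
  using assms
proof (induction es arbitrary: vs)
  case Nil
  then show ?case by (auto simp: is_walk_Nil intro!: exI[of _ "[]"] exI[of _ vs])
next
  case (Cons e es)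
  then obtain v vs' where vs: "vs = v # vs'" and e: "ends e = {v, hd vs'}"
    and walk: "is_walk ends es vs'"
    by (auto simp: is_walk_Cons)
  obtain es2 vs2 where path: "set es2 \<subseteq> E" "is_walk ends es2 vs2" "hd vs2 = hd vs'"
    "last vs2 = last vs'" "distinct vs2"
    using Cons.IH[OF walk] Cons.prems by auto
  have ne: "vs' \<noteq> []" "vs2 \<noteq> []"
    using is_walk_nonempty walk path(2) by blast+
  show ?case
  proof (cases "v \<in> set vs2")
    case True
    then obtain p where p: "p < length vs2" "vs2 ! p = v"
      by (auto simp: in_set_conv_nth)
    have "is_walk ends (drop p es2) (drop p vs2)"
      using is_walk_drop[OF path(2) p(1)] .
    moreover have "set (drop p es2) \<subseteq> E"
      using path(1) by (meson order.trans set_drop_subset)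
    moreover have "hd (drop p vs2) = hd vs" "last (drop p vs2) = last vs"
      using p vs path ne by (simp_all add: hd_drop_conv_nth)
    moreover have "distinct (drop p vs2)"
      using path(5) by simp
    ultimately show ?thesis
      by blast
  next
    case False
    have "is_walk ends (e # es2) (v # vs2)"
      using e path(2,3) by (auto simp: is_walk_Cons)
    then show ?thesis
      using False path vs ne Cons.prems(2) by (intro exI[of _ "e # es2"] exI[of _ "v # vs2"]) auto
  qed
qed

lemma is_walk_closed:
  assumes "is_walk ends es vs" "set es \<subseteq> E"
    and "\<And>e a b. e \<in> E \<Longrightarrow> ends e = {a, b} \<Longrightarrow> a \<in> X \<longleftrightarrow> b \<in> X"
    and "hd vs \<in> X"
  shows "last vs \<in> X"
  using assms
proof (induction es arbitrary: vs)
  case Nil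
  then show ?case by (auto simp: is_walk_Nil)
next
  case (Cons e es)
  then obtain v vs' where vs: "vs = v # vs'" and e: "ends e = {v, hd vs'}"
    and walk: "is_walk ends es vs'"
    by (auto simp: is_walk_Cons)
  have "hd vs' \<in> X"
    using Cons.prems(2-4) e vs by auto
  then have "last vs' \<in> X"
    using Cons.IH[OF walk] Cons.prems(2,3) by auto
  then show ?case
    using vs is_walk_nonempty[OF walk] by simp
qed

lemma reach_refl: "reach ends E u u"
  unfolding reach_def by (rule exI[of _ "[]"], rule exI[of _ "[u]"]) (simp add: is_walk_Nil)

lemma reach_edge: "e \<in> E \<Longrightarrow> ends e = {u, v} \<Longrightarrow> reach ends E u v"
  unfolding reach_def
  by (rule exI[of _ "[e]"], rule exI[of _ "[u, v]"]) (simp add: is_walk_Cons is_walk_Nil)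

lemma reach_trans:
  assumes "reach ends E u v" "reach ends E v w"
  shows "reach ends E u w"
proof -
  obtain es1 vs1 where 1: "set es1 \<subseteq> E" "is_walk ends es1 vs1" "hd vs1 = u" "last vs1 = v"
    using assms(1) unfolding reach_def by blast
  obtain es2 vs2 where 2: "set es2 \<subseteq> E" "is_walk ends es2 vs2" "hd vs2 = v" "last vs2 = w"
    using assms(2) unfolding reach_def by blast
  have ne: "vs1 \<noteq> []" "vs2 \<noteq> []"
    using is_walk_nonempty 1(2) 2(2) by blast+
  have "last (vs1 @ tl vs2) = w"
    using 1(4) 2(3,4) ne by (cases vs2) auto
  moreover have "is_walk ends (es1 @ es2) (vs1 @ tl vs2)"
    using is_walk_append[OF 1(2) 2(2)] 1(4) 2(3) by simp
  ultimately show ?thesis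
    unfolding reach_def using 1 2(1) ne by (intro exI[of _ "es1 @ es2"] exI[of _ "vs1 @ tl vs2"]) auto
qed

lemma reach_sym: "reach ends E u v \<Longrightarrow> reach ends E v u"
  unfolding reach_def by (metis is_walk_rev set_rev hd_rev last_rev)

lemma reach_commute: "reach ends E u v \<longleftrightarrow> reach ends E v u"
  by (blast intro: reach_sym)

lemma reach_mono: "reach ends E u v \<Longrightarrow> E \<subseteq> E' \<Longrightarrow> reach ends E' u v"
  unfolding reach_def by blast

lemma reach_map_vertices:
  "reach ends E u v \<Longrightarrow> (\<And>e. ends' e = q ` ends e) \<Longrightarrow> reach ends' E (q u) (q v)"
  unfolding reach_def by (metis is_walk_map_vertices is_walk_nonempty hd_map last_map)

lemma reach_transfer:
  assumes "reach ends E u v" and "\<And>e. e \<in> E \<Longrightarrow> \<exists>e'\<in>E'. ends' e' = ends e"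
  shows "reach ends' E' u v"
proof -
  obtain \<phi> where \<phi>: "\<And>e. e \<in> E \<Longrightarrow> \<phi> e \<in> E' \<and> ends' (\<phi> e) = ends e"
    using assms(2) by metis
  obtain es vs where walk: "set es \<subseteq> E" "is_walk ends es vs" "hd vs = u" "last vs = v"
    using assms(1) unfolding reach_def by blast
  have "is_walk ends' (map \<phi> es) vs"
    using is_walk_map_edges[OF walk(2)] \<phi> walk(1) by blast
  moreover have "set (map \<phi> es) \<subseteq> E'"
    using walk(1) \<phi> by auto
  ultimately show ?thesis
    unfolding reach_def using walk by blast
qed

lemma reach_closed:
  "reach ends E u v \<Longrightarrow> (\<And>e a b. e \<in> E \<Longrightarrow> ends e = {a, b} \<Longrightarrow> a \<in> X \<longleftrightarrow> b \<in> X) \<Longrightarrow>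
   u \<in> X \<Longrightarrow> v \<in> X"
  unfolding reach_def by (metis is_walk_closed)

lemma reach_edge_iff:
  "e \<in> E \<Longrightarrow> ends e = {a, b} \<Longrightarrow> reach ends E x a \<longleftrightarrow> reach ends E x b"
  by (meson reach_edge reach_sym reach_trans)

lemma reach_isolated:
  "reach ends E v w \<Longrightarrow> (\<And>e. e \<in> E \<Longrightarrow> v \<notin> ends e) \<Longrightarrow> w = v"
  using reach_closed[of ends E v w "{v}"] by (metis insertI1 insert_commute singletonD)

section \<open>Forests and graphic bases\<close>

lemma insert_reach_not_acyclic:
  assumes "e \<notin> J" "ends e = {u, v}" "reach ends J v u"
  shows "\<not> acyclic_edges ends (insert e J)"
proof -
  obtain es vs where walk: "set es \<subseteq> J" "is_walk ends es vs" "hd vs = v" "last vs = u"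
    using assms(3) unfolding reach_def by blast
  obtain es' vs' where path: "set es' \<subseteq> J" "is_walk ends es' vs'" "hd vs' = v" "last vs' = u"
    "distinct vs'"
    using is_walk_shortcut[OF walk(2,1)] walk by auto
  have "is_walk ends (e # es') (u # vs')"
    using assms(2) path by (auto simp: is_walk_Cons)
  moreover have "distinct (e # es')"
    using is_walk_distinct_edges[OF path(2,5)] path(1) assms(1) by auto
  moreover have "hd (u # vs') = last (u # vs')"
    using path is_walk_nonempty by simp
  ultimately show ?thesis
    unfolding acyclic_edges_def using path(1) by (metis list.discI insert_mono set_simps(2))
qed

lemma acyclic_edges_not_reach:
  assumes "acyclic_edges ends J" "e \<in> J" "ends e = {u, v}"
  shows "\<not> reach ends (J - {e}) v u"
  using insert_reach_not_acyclic[of e "J - {e}" ends u v] assms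
  by (metis Diff_iff insert_Diff singletonI)

lemma not_acyclic_edges_reach:
  assumes "\<not> acyclic_edges ends J"
  shows "\<exists>e\<in>J. \<exists>u v. ends e = {u, v} \<and> reach ends (J - {e}) v u"
proof -
  obtain es vs where cycle: "es \<noteq> []" "distinct es" "set es \<subseteq> J" "is_walk ends es vs"
    "hd vs = last vs"
    using assms unfolding acyclic_edges_def by blast
  then obtain e es' where es: "es = e # es'"
    by (cases es) auto
  then obtain v vs' where vs: "vs = v # vs'" and e: "ends e = {v, hd vs'}"
    and walk: "is_walk ends es' vs'"
    using cycle(4) by (auto simp: is_walk_Cons)
  have "set es' \<subseteq> J - {e}"
    using cycle(2,3) es by auto
  then have "reach ends (J - {e}) (hd vs') (last vs')"
    unfolding reach_def using walk by blast
  moreover have "last vs' = v"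
    using cycle(5) vs is_walk_nonempty[OF walk] by simp
  ultimately show ?thesis
    using e es cycle(3) by auto
qed

lemma acyclic_edges_map_vertices:
  assumes "acyclic_edges (\<lambda>e. q ` ends e) J"
  shows "acyclic_edges ends J"
  using assms unfolding acyclic_edges_def
  by (metis is_walk_map_vertices is_walk_nonempty hd_map last_map)

lemma acyclic_edges_inj_on:
  assumes "acyclic_edges ends' K" "inj_on \<phi> J" "\<phi> ` J \<subseteq> K"
    and "\<And>e. e \<in> J \<Longrightarrow> ends' (\<phi> e) = ends e"
  shows "acyclic_edges ends J"
  unfolding acyclic_edges_def
proof
  assume "\<exists>es vs. es \<noteq> [] \<and> distinct es \<and> set es \<subseteq> J \<and> is_walk ends es vs \<and> hd vs = last vs"
  then obtain es vs where cycle: "es \<noteq> []" "distinct es" "set es \<subseteq> J" "is_walk ends es vs"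
    "hd vs = last vs"
    by blast
  have "is_walk ends' (map \<phi> es) vs"
    using is_walk_map_edges[OF cycle(4)] assms(4) cycle(3) by blast
  moreover have "distinct (map \<phi> es)"
    using cycle(2,3) assms(2) by (simp add: distinct_map inj_on_subset)
  moreover have "set (map \<phi> es) \<subseteq> K"
    using cycle(3) assms(3) by auto
  ultimately show False
    using assms(1) cycle(1,5) unfolding acyclic_edges_def by blast
qed

lemma graphic_basisI:
  assumes "J \<subseteq> E" "acyclic_edges ends J"
    and "\<And>e. e \<in> E - J \<Longrightarrow> \<exists>u v. ends e = {u, v} \<and> reach ends J u v"
  shows "graphic_basis ends E J"
  unfolding graphic_basis_def graphic_indep_def
  using assms insert_reach_not_acyclic reach_sym by (metis DiffD2)

section \<open>Identifying vertices in distinct components of a forest\<close>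

lemma reach_identify_terminal_free:
  assumes reach: "reach (\<lambda>e. q ` ends e) E (q a) (q b)"
    and q: "\<And>v. q v = (if v \<in> S then s0 else v)" and "s0 \<in> S"
    and terminal_free: "\<And>w. reach ends E a w \<Longrightarrow> w \<notin> S"
    and ends2: "\<forall>e\<in>E. \<exists>c d. ends e = {c, d}"
  shows "reach ends E a b"
proof -
  define A where "A = {w. reach ends E a w}"
  have q_A: "q w \<in> A \<longleftrightarrow> w \<in> A" for w
  proof (cases "w \<in> S")
    case True
    then have "q w = s0"
      by (simp add: q)
    moreover have "s0 \<notin> A" "w \<notin> A"
      using True \<open>s0 \<in> S\<close> terminal_free by (auto simp: A_def)
    ultimately show ?thesis
      by simp
  qed (simp add: q)
  have "c \<in> A \<longleftrightarrow> d \<in> A" if eE: "e \<in> E" and qe: "q ` ends e = {c, d}" for e c d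
  proof -
    obtain c' d' where e: "ends e = {c', d'}"
      using ends2 eE by blast
    then have "{c, d} = {q c', q d'}"
      using qe by simp
    then have "c = q c' \<and> d = q d' \<or> c = q d' \<and> d = q c'"
      by (simp add: doubleton_eq_iff)
    moreover have "c' \<in> A \<longleftrightarrow> d' \<in> A"
      using reach_edge_iff[of e E ends c' d' a] eE e by (simp add: A_def)
    ultimately show ?thesis
      using q_A by blast
  qed
  moreover have "q a \<in> A"
    unfolding q_A by (simp add: A_def reach_refl)
  ultimately have "q b \<in> A"
    by (rule reach_closed[OF reach])
  then show ?thesis
    unfolding q_A by (simp add: A_def)
qed

text \<open>A cycle created by the identification would pass through an edge \<open>e\<close> of \<open>J\<close> both of
  whose sides in \<open>J - e\<close> contain a terminal; through \<open>e\<close> these two terminals are connected.\<close>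

lemma acyclic_edges_identify:
  assumes acyclic: "acyclic_edges ends J" and ends2: "\<forall>e\<in>J. \<exists>a b. ends e = {a, b}"
    and separated: "\<forall>a\<in>S. \<forall>b\<in>S. a \<noteq> b \<longrightarrow> \<not> reach ends J a b" and "s0 \<in> S"
    and q: "\<And>v. q v = (if v \<in> S then s0 else v)"
  shows "acyclic_edges (\<lambda>e. q ` ends e) J"
proof (rule ccontr)
  assume "\<not> acyclic_edges (\<lambda>e. q ` ends e) J"
  from not_acyclic_edges_reach[OF this] obtain e u v where e: "e \<in> J" "q ` ends e = {u, v}"
    and uv: "reach (\<lambda>e. q ` ends e) (J - {e}) v u"
    by blast
  obtain a b where ab: "ends e = {a, b}"
    using ends2 e(1) by blast
  have not_ba: "\<not> reach ends (J - {e}) b a"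
    using acyclic_edges_not_reach[OF acyclic e(1) ab] .
  have not_ab: "\<not> reach ends (J - {e}) a b"
    using acyclic_edges_not_reach[OF acyclic e(1)] ab by (simp add: insert_commute)
  have qab: "reach (\<lambda>e. q ` ends e) (J - {e}) (q a) (q b)"
  proof -
    have "{q a, q b} = {u, v}"
      using e(2) ab by simp
    then have "(q a = u \<and> q b = v) \<or> (q a = v \<and> q b = u)"
      by (simp add: doubleton_eq_iff)
    then show ?thesis
      using uv reach_sym by auto
  qed
  have ends2': "\<forall>e'\<in>J - {e}. \<exists>c d. ends e' = {c, d}"
    using ends2 by blast
  obtain t1 where t1: "t1 \<in> S" "reach ends (J - {e}) a t1"
    using reach_identify_terminal_free[OF qab q \<open>s0 \<in> S\<close> _ ends2'] not_ab by blast
  obtain t2 where t2: "t2 \<in> S" "reach ends (J - {e}) b t2"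
    using reach_identify_terminal_free[OF reach_sym[OF qab] q \<open>s0 \<in> S\<close> _ ends2'] not_ba by blast
  have "J - {e} \<subseteq> J"
    by blast
  then have "reach ends J t1 a" "reach ends J b t2"
    using reach_mono[OF reach_sym[OF t1(2)]] reach_mono[OF t2(2)] by simp_all
  then have "reach ends J t1 t2"
    using reach_edge[of e J ends a b] e(1) ab reach_trans by metis
  then have "t1 = t2"
    using separated t1(1) t2(1) by blast
  then show False
    using t1(2) t2(2) not_ab reach_sym reach_trans by metis
qed

section \<open>Lifting an \<open>S\<close>-wide spanning tree\<close>

lemma simple_graph_edge:
  assumes "simple_graph W F" "e \<in> F"
  shows "\<exists>a b. e = {a, b} \<and> a \<noteq> b \<and> a \<in> W \<and> b \<in> W"
proof -
  have "e \<subseteq> W" "card e = 2"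
    using assms unfolding simple_graph_def by auto
  then show ?thesis
    by (auto simp: card_2_iff)
qed

locale wide_spanning_tree =
  fixes W :: "'a set" and F :: "'a set set" and r s :: "nat \<Rightarrow> 'a" and k :: nat
    and T :: "'a set set"
  assumes simple: "simple_graph W F"
    and root_in_W: "r 1 \<in> W"
    and k_pos: "1 \<le> k"
    and s_inj: "inj_on s {1..k}"
    and terminal_in_W: "i \<in> {1..k} \<Longrightarrow> s i \<in> W \<and> s i \<noteq> r 1"
    and r_inj: "inj_on r {1..k}"
    and copy_not_in_W: "i \<in> {2..k} \<Longrightarrow> r i \<notin> W"
    and tree: "spanning_tree W F T"
    and wide: "S_wide (r 1) (s ` {1..k}) T"
begin

lemma tree_edge: "e \<in> T \<Longrightarrow> \<exists>a b. e = {a, b} \<and> a \<noteq> b \<and> a \<in> W \<and> b \<in> W"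
  using simple_graph_edge[OF simple] tree unfolding spanning_tree_def by blast

lemma root_edge: "{r 1, x} \<in> T \<Longrightarrow> x \<in> W \<and> x \<noteq> r 1"
  using tree_edge[of "{r 1, x}"] by (auto simp: doubleton_eq_iff)

lemma tree_edge_at_root: "e \<in> T \<Longrightarrow> r 1 \<in> e \<Longrightarrow> \<exists>x. e = {r 1, x}"
  using tree_edge[of e] by (auto simp: insert_commute)

lemma ident_r_fixed:
  assumes "w \<in> W" "w \<noteq> r 1"
  shows "ident r k w = w"
proof -
  have "w \<noteq> r j" if "j \<in> {1..k}" for j
    using assms copy_not_in_W[of j] that by (cases "j = 1") auto
  then have "w \<notin> r ` {1..k}"
    by blast
  then show ?thesis
    by (simp add: ident_def)
qed

lemma ident_r_copy: "i \<in> {1..k} \<Longrightarrow> ident r k (r i) = r 1"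
  unfolding ident_def by simp

definition T_minus_root :: "'a set set" where
  "T_minus_root = {e \<in> T. r 1 \<notin> e}"

lemma T_minus_root_subset: "T_minus_root \<subseteq> T"
  unfolding T_minus_root_def by blast

lemma terminals_separated:
  assumes "i \<in> {1..k}" "j \<in> {1..k}" "reach id T_minus_root (s i) (s j)"
  shows "i = j"
proof (rule ccontr)
  assume "i \<noteq> j"
  then have "s i \<noteq> s j"
    using inj_on_contraD[OF s_inj] assms(1,2) by blast
  moreover have "s i \<in> s ` {1..k}" "s j \<in> s ` {1..k}"
    using assms(1,2) by simp_all
  ultimately show False
    using wide assms(3) unfolding S_wide_def T_minus_root_def by blast
qed

lemma copy_not_reach_terminal:
  assumes "j \<in> {1..k}" "i \<in> {1..k}"
  shows "\<not> reach id T_minus_root (r j) (s i)"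
proof
  assume reach: "reach id T_minus_root (r j) (s i)"
  have "r j \<notin> e" if "e \<in> T_minus_root" for e
  proof (cases "j = 1")
    case False
    then have "r j \<notin> W"
      using assms(1) copy_not_in_W by simp
    then show ?thesis
      using that tree_edge T_minus_root_subset by blast
  qed (use that in \<open>simp add: T_minus_root_def\<close>)
  then have "s i = r j"
    using reach_isolated[OF reach] by simp
  then show False
    using terminal_in_W[OF assms(2)] copy_not_in_W[of j] assms(1) by (cases "j = 1") auto
qed

lemma reach_root_neighbour:
  assumes "v \<in> W" "v \<noteq> r 1"
  shows "\<exists>x. {r 1, x} \<in> T \<and> reach id T_minus_root v x"
proof (rule ccontr)
  assume no_neighbour: "\<not> ?thesis"
  define D where "D = {w. reach id T_minus_root v w}"
  have root_notin_D: "r 1 \<notin> D"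
  proof
    assume "r 1 \<in> D"
    then have "reach id T_minus_root (r 1) v"
      unfolding D_def by (simp add: reach_sym)
    then have "v = r 1"
      by (rule reach_isolated) (simp add: T_minus_root_def)
    then show False
      using assms(2) by simp
  qed
  have "a \<in> D \<longleftrightarrow> b \<in> D" if eT: "e \<in> T" and eab: "id e = {a, b}" for e a b
  proof (cases "r 1 \<in> e")
    case False
    then have "e \<in> T_minus_root"
      using eT unfolding T_minus_root_def by simp
    then show ?thesis
      using reach_edge_iff[of e T_minus_root id a b v] eab unfolding D_def by simp
  next
    case True
    then obtain x where x: "e = {r 1, x}"
      using tree_edge_at_root eT by blast
    have "x \<notin> D"
      using no_neighbour eT x unfolding D_def by blast
    then have "a \<notin> D" "b \<notin> D"
      using root_notin_D x eab by (auto simp: doubleton_eq_iff)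
    then show ?thesis
      by simp
  qed
  moreover have "v \<in> D"
    unfolding D_def by (simp add: reach_refl)
  moreover have "reach id T v (r 1)"
    using tree assms(1) root_in_W unfolding spanning_tree_def by blast
  ultimately have "r 1 \<in> D"
    using reach_closed by metis
  then show False
    using root_notin_D by simp
qed

text \<open>Components of \<open>T - r\<^sub>1\<close> without a terminal get the default label 1, so their root
  edge stays at \<open>r\<^sub>1\<close>.\<close>

definition label :: "'a \<Rightarrow> nat" where
  "label x = (if \<exists>i\<in>{1..k}. reach id T_minus_root x (s i)
     then SOME i. i \<in> {1..k} \<and> reach id T_minus_root x (s i) else 1)"

lemma label_reach:
  assumes "\<exists>i\<in>{1..k}. reach id T_minus_root x (s i)"
  shows "label x \<in> {1..k} \<and> reach id T_minus_root x (s (label x))"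
proof -
  have "\<exists>i. i \<in> {1..k} \<and> reach id T_minus_root x (s i)"
    using assms by blast
  then have "(SOME i. i \<in> {1..k} \<and> reach id T_minus_root x (s i)) \<in> {1..k} \<and>
    reach id T_minus_root x (s (SOME i. i \<in> {1..k} \<and> reach id T_minus_root x (s i)))"
    by (rule someI_ex)
  then show ?thesis
    unfolding label_def using assms by simp
qed

lemma label_in_range: "label x \<in> {1..k}"
  using label_reach[of x] k_pos unfolding label_def by auto

lemma label_eqI:
  assumes "i \<in> {1..k}" "reach id T_minus_root x (s i)"
  shows "label x = i"
proof -
  have "label x \<in> {1..k}" "reach id T_minus_root x (s (label x))"
    using label_reach assms by blast+
  then show ?thesis
    using terminals_separated assms reach_sym reach_trans by metis
qed

lemma label_eq_iff:
  assumes "i \<in> {2..k}"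
  shows "label x = i \<longleftrightarrow> reach id T_minus_root x (s i)"
  using assms label_eqI[of i x] label_reach[of x] unfolding label_def by auto

definition lifted_tree :: "'a set set" where
  "lifted_tree = T_minus_root \<union> {{r (label x), x} | x. {r 1, x} \<in> T}"

lemma T_minus_root_subset_lifted_tree: "T_minus_root \<subseteq> lifted_tree"
  unfolding lifted_tree_def by blast

lemma lifted_root_edge: "{r 1, x} \<in> T \<Longrightarrow> {r (label x), x} \<in> lifted_tree"
  unfolding lifted_tree_def by blast

lemma lifted_treeE:
  assumes "e \<in> lifted_tree"
  obtains "e \<in> T_minus_root" | x where "{r 1, x} \<in> T" "e = {r (label x), x}"
  using assms unfolding lifted_tree_def by blast

lemma lifted_tree_subset: "lifted_tree \<subseteq> Fprime r k F"
proof
  fix e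
  assume "e \<in> lifted_tree"
  then show "e \<in> Fprime r k F"
  proof (cases rule: lifted_treeE)
    case 1
    then show ?thesis
      using T_minus_root_subset tree unfolding spanning_tree_def Fprime_def by blast
  next
    case (2 x)
    moreover have "label x = 1 \<or> label x \<in> {2..k}"
      using label_in_range[of x] by auto
    ultimately show ?thesis
      using tree unfolding spanning_tree_def Fprime_def by auto
  qed
qed

lemma ident_T_minus_root:
  assumes "e \<in> T_minus_root"
  shows "ident r k ` e = e"
proof -
  have "e \<subseteq> W" "r 1 \<notin> e"
    using assms tree_edge unfolding T_minus_root_def by blast+
  then have "\<forall>w\<in>e. ident r k w = w"
    using ident_r_fixed by blast
  then show ?thesis
    by simp
qed

lemma ident_lifted_root_edge:
  assumes "{r 1, x} \<in> T"
  shows "ident r k ` {r (label x), x} = {r 1, x}"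
proof -
  have "ident r k x = x"
    using root_edge[OF assms] ident_r_fixed by blast
  then show ?thesis
    using ident_r_copy[OF label_in_range] by simp
qed

lemma image_ident_lifted_tree: "(\<lambda>e. ident r k ` e) ` lifted_tree = T"
proof (intro equalityI subsetI)
  fix t
  assume "t \<in> (\<lambda>e. ident r k ` e) ` lifted_tree"
  then obtain e where e: "e \<in> lifted_tree" "t = ident r k ` e"
    by blast
  from e(1) show "t \<in> T"
  proof (cases rule: lifted_treeE)
    case 1
    then show ?thesis
      using e(2) ident_T_minus_root T_minus_root_subset by auto
  next
    case (2 x)
    then show ?thesis
      using e(2) ident_lifted_root_edge by simp
  qed
next
  fix t
  assume t: "t \<in> T"
  show "t \<in> (\<lambda>e. ident r k ` e) ` lifted_tree"
  proof (cases "r 1 \<in> t")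
    case True
    then obtain x where x: "t = {r 1, x}"
      using tree_edge_at_root t by blast
    then have "{r (label x), x} \<in> lifted_tree"
      using t lifted_root_edge by simp
    moreover have "t = ident r k ` {r (label x), x}"
      using ident_lifted_root_edge t x by simp
    ultimately show ?thesis
      by (rule rev_image_eqI)
  next
    case False
    then have "t \<in> T_minus_root"
      using t unfolding T_minus_root_def by simp
    then have "t \<in> lifted_tree" "t = ident r k ` t"
      using ident_T_minus_root T_minus_root_subset_lifted_tree by auto
    then show ?thesis
      by (rule rev_image_eqI)
  qed
qed

lemma inj_on_ident_lifted_tree: "inj_on (\<lambda>e. ident r k ` e) lifted_tree"
proof
  fix e1 e2
  assume e1: "e1 \<in> lifted_tree" and e2: "e2 \<in> lifted_tree"
    and eq: "ident r k ` e1 = ident r k ` e2"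
  have root_free: "r 1 \<notin> ident r k ` e" if "e \<in> T_minus_root" for e
    using ident_T_minus_root[OF that] that unfolding T_minus_root_def by simp
  from e1 show "e1 = e2"
  proof (cases rule: lifted_treeE)
    case 1
    from e2 show ?thesis
    proof (cases rule: lifted_treeE)
      case 1
      then show ?thesis
        using \<open>e1 \<in> T_minus_root\<close> eq ident_T_minus_root by simp
    next
      case (2 y)
      then show ?thesis
        using \<open>e1 \<in> T_minus_root\<close> eq root_free ident_lifted_root_edge by force
    qed
  next
    case (2 x)
    from e2 show ?thesis
    proof (cases rule: lifted_treeE)
      case 1
      then show ?thesis
        using 2 eq root_free ident_lifted_root_edge by force
    next
      case (2 y)
      then have "{r 1, x} = {r 1, y}"
        using \<open>{r 1, x} \<in> T\<close> \<open>e1 = {r (label x), x}\<close> eq ident_lifted_root_edge by simp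
      then have "x = y"
        using root_edge[of x] root_edge[of y] \<open>{r 1, x} \<in> T\<close> 2(1) by (auto simp: doubleton_eq_iff)
      then show ?thesis
        using \<open>e1 = {r (label x), x}\<close> 2(2) by simp
    qed
  qed
qed


lemma acyclic_lifted_tree_ident: "acyclic_edges (\<lambda>e. ident r k ` e) lifted_tree"
proof (rule acyclic_edges_inj_on[of id T])
  show "acyclic_edges id T"
    using tree unfolding spanning_tree_def by blast
qed (use inj_on_ident_lifted_tree image_ident_lifted_tree in auto)

lemma acyclic_lifted_tree: "acyclic_edges id lifted_tree"
  using acyclic_edges_map_vertices[of "ident r k" id] acyclic_lifted_tree_ident by simp

lemma lifted_tree_edge:
  assumes "e \<in> lifted_tree"
  shows "\<exists>a b. e = {a, b}"
  using assms
proof (cases rule: lifted_treeE)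
  case 1
  then show ?thesis
    using tree_edge T_minus_root_subset by blast
qed blast

lemma lifted_tree_component:
  assumes i: "i \<in> {2..k}" and reach: "reach id lifted_tree (s i) v"
  shows "v = r i \<or> reach id T_minus_root v (s i)"
proof -
  define X where "X = insert (r i) {w. reach id T_minus_root w (s i)}"
  have same_side: "\<forall>w\<in>e. \<forall>w'\<in>e. w \<in> X \<longleftrightarrow> w' \<in> X" if e: "e \<in> lifted_tree" for e
    using e
  proof (cases rule: lifted_treeE)
    case 1
    then obtain c d where cd: "e = {c, d}" "c \<in> W" "d \<in> W"
      using tree_edge T_minus_root_subset by blast
    then have "c \<in> X \<longleftrightarrow> reach id T_minus_root c (s i)" "d \<in> X \<longleftrightarrow> reach id T_minus_root d (s i)"
      using copy_not_in_W[OF i] unfolding X_def by auto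
    moreover have "reach id T_minus_root c (s i) \<longleftrightarrow> reach id T_minus_root d (s i)"
      using reach_edge_iff[of e T_minus_root id c d "s i"] 1 cd(1) by (simp add: reach_commute)
    ultimately show ?thesis
      using cd(1) by auto
  next
    case (2 x)
    have "x \<noteq> r i"
      using root_edge[OF 2(1)] copy_not_in_W[OF i] by auto
    then have "x \<in> X \<longleftrightarrow> label x = i"
      using label_eq_iff[OF i, of x] unfolding X_def by simp
    moreover have "r (label x) \<in> X \<longleftrightarrow> label x = i"
    proof -
      have "r (label x) = r i \<longleftrightarrow> label x = i"
        using inj_on_eq_iff[OF r_inj label_in_range, of i] i by auto
      then show ?thesis
        using copy_not_reach_terminal[OF label_in_range, of i x] i unfolding X_def by auto
    qed
    ultimately show ?thesis
      using 2(2) by simp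
  qed
  have "a \<in> X \<longleftrightarrow> b \<in> X" if e: "e \<in> lifted_tree" and ab: "id e = {a, b}" for e a b
  proof -
    have "a \<in> e" "b \<in> e"
      using ab by auto
    then show ?thesis
      using same_side[OF e] by blast
  qed
  moreover have "s i \<in> X"
    unfolding X_def by (simp add: reach_refl)
  ultimately have "v \<in> X"
    by (rule reach_closed[OF reach])
  then show ?thesis
    unfolding X_def by blast
qed

lemma lifted_tree_terminals_separated:
  assumes "i \<in> {1..k}" "j \<in> {1..k}" "reach id lifted_tree (s i) (s j)"
  shows "i = j"
proof -
  have from_copy: "i = j"
    if "i \<in> {2..k}" "j \<in> {1..k}" "reach id lifted_tree (s i) (s j)" for i j
  proof -
    have "s j \<noteq> r i"
      using terminal_in_W[OF that(2)] copy_not_in_W[OF that(1)] by auto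
    then have "reach id T_minus_root (s j) (s i)"
      using lifted_tree_component[OF that(1,3)] by blast
    then show ?thesis
      using terminals_separated[of j i] that(1,2) by simp
  qed
  consider "i = j" | "i \<in> {2..k}" | "j \<in> {2..k}"
    using assms(1,2) by fastforce
  then show ?thesis
  proof cases
    case 2
    then show ?thesis
      using from_copy[OF _ assms(2,3)] by simp
  next
    case 3
    then show ?thesis
      using from_copy[OF _ assms(1) reach_sym[OF assms(3)]] by simp
  qed
qed

lemma copy_reaches_terminal:
  assumes "i \<in> {1..k}"
  shows "reach id lifted_tree (r i) (s i)"
proof -
  obtain x where x: "{r 1, x} \<in> T" "reach id T_minus_root (s i) x"
    using reach_root_neighbour terminal_in_W[OF assms] by blast
  have "label x = i"
    using label_eqI[OF assms reach_sym[OF x(2)]] .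
  then have "{r i, x} \<in> lifted_tree"
    using lifted_root_edge[OF x(1)] by simp
  then have "reach id lifted_tree (r i) x"
    by (simp add: reach_edge)
  moreover have "reach id lifted_tree x (s i)"
    using reach_mono[OF reach_sym[OF x(2)] T_minus_root_subset_lifted_tree] .
  ultimately show ?thesis
    by (rule reach_trans)
qed

lemma reaches_terminal:
  assumes "v \<in> W \<union> r ` {2..k}"
  shows "\<exists>i\<in>{1..k}. reach id lifted_tree v (s i)"
proof (cases "v \<in> W \<and> v \<noteq> r 1")
  case True
  then obtain x where x: "{r 1, x} \<in> T" "reach id T_minus_root v x"
    using reach_root_neighbour by blast
  have v_x: "reach id lifted_tree v x"
    using reach_mono[OF x(2) T_minus_root_subset_lifted_tree] .
  show ?thesis
  proof (cases "\<exists>i\<in>{1..k}. reach id T_minus_root x (s i)")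
    case True
    then obtain i where i: "i \<in> {1..k}" "reach id T_minus_root x (s i)"
      by blast
    have "reach id lifted_tree x (s i)"
      using reach_mono[OF i(2) T_minus_root_subset_lifted_tree] .
    then show ?thesis
      using reach_trans[OF v_x] i(1) by blast
  next
    case False
    then have "label x = 1"
      unfolding label_def by simp
    then have "{r 1, x} \<in> lifted_tree"
      using lifted_root_edge[OF x(1)] by simp
    then have "reach id lifted_tree x (r 1)"
      by (simp add: reach_edge insert_commute)
    moreover have "reach id lifted_tree (r 1) (s 1)"
      using copy_reaches_terminal[of 1] k_pos by simp
    ultimately have "reach id lifted_tree v (s 1)"
      using reach_trans[OF v_x reach_trans] by blast
    then show ?thesis
      using k_pos by auto
  qed
next
  case False
  then have "v \<in> r ` {1..k}"
    using assms k_pos by auto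
  then show ?thesis
    using copy_reaches_terminal by blast
qed

lemma Fprime_edge:
  assumes "e \<in> Fprime r k F"
  shows "\<exists>a b. e = {a, b} \<and> a \<in> W \<union> r ` {2..k} \<and> b \<in> W \<union> r ` {2..k}"
proof -
  consider "e \<in> F" | i x where "i \<in> {2..k}" "{r 1, x} \<in> F" "e = {r i, x}"
    using assms unfolding Fprime_def by blast
  then show ?thesis
  proof cases
    case 1
    then show ?thesis
      using simple_graph_edge[OF simple] by blast
  next
    case (2 i x)
    then have "x \<in> W"
      using simple_graph_edge[OF simple 2(2)] by (auto simp: doubleton_eq_iff)
    then show ?thesis
      using 2 by blast
  qed
qed

lemma ident_r_in_W:
  assumes "v \<in> W \<union> r ` {2..k}"
  shows "ident r k v \<in> W"
proof -
  consider "v \<in> W" "v \<noteq> r 1" | "v \<in> r ` {1..k}"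
    using assms k_pos by fastforce
  then show ?thesis
    by cases (use ident_r_fixed ident_r_copy root_in_W in auto)
qed

lemma graphic_basis_ident_r: "graphic_basis (\<lambda>e. ident r k ` e) (Fprime r k F) lifted_tree"
proof (rule graphic_basisI[OF lifted_tree_subset acyclic_lifted_tree_ident])
  fix e
  assume "e \<in> Fprime r k F - lifted_tree"
  then obtain a b where ab: "e = {a, b}" "a \<in> W \<union> r ` {2..k}" "b \<in> W \<union> r ` {2..k}"
    using Fprime_edge by blast
  have "reach id T (ident r k a) (ident r k b)"
    using tree ident_r_in_W ab(2,3) unfolding spanning_tree_def by blast
  moreover have "\<exists>e'\<in>lifted_tree. ident r k ` e' = id t" if "t \<in> T" for t
  proof -
    have "t \<in> (\<lambda>e. ident r k ` e) ` lifted_tree"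
      using that image_ident_lifted_tree by simp
    then show ?thesis
      by auto
  qed
  ultimately have "reach (\<lambda>e. ident r k ` e) lifted_tree (ident r k a) (ident r k b)"
    by (rule reach_transfer)
  then show "\<exists>u v. ident r k ` e = {u, v} \<and> reach (\<lambda>e. ident r k ` e) lifted_tree u v"
    using ab(1) by auto
qed

lemma graphic_basis_ident_s: "graphic_basis (\<lambda>e. ident s k ` e) (Fprime r k F) lifted_tree"
proof (rule graphic_basisI[OF lifted_tree_subset])
  have "\<forall>a\<in>s ` {1..k}. \<forall>b\<in>s ` {1..k}. a \<noteq> b \<longrightarrow> \<not> reach id lifted_tree a b"
    using lifted_tree_terminals_separated by blast
  then have "acyclic_edges (\<lambda>e. ident s k ` id e) lifted_tree"
    using acyclic_edges_identify[OF acyclic_lifted_tree _ _ _ ident_def] lifted_tree_edge k_pos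
    by simp
  then show "acyclic_edges (\<lambda>e. ident s k ` e) lifted_tree"
    by simp
next
  have to_s1: "reach (\<lambda>e. ident s k ` e) lifted_tree (ident s k v) (s 1)"
    if v: "v \<in> W \<union> r ` {2..k}" for v
  proof -
    obtain i where i: "i \<in> {1..k}" "reach id lifted_tree v (s i)"
      using reaches_terminal[OF v] by blast
    have "reach (\<lambda>e. ident s k ` e) lifted_tree (ident s k v) (ident s k (s i))"
      by (rule reach_map_vertices[OF i(2)]) simp
    then show ?thesis
      using i(1) by (simp add: ident_def)
  qed
  fix e
  assume "e \<in> Fprime r k F - lifted_tree"
  then obtain a b where ab: "e = {a, b}" "a \<in> W \<union> r ` {2..k}" "b \<in> W \<union> r ` {2..k}"
    using Fprime_edge by blast
  then have "reach (\<lambda>e. ident s k ` e) lifted_tree (ident s k a) (ident s k b)"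
    using to_s1 reach_sym reach_trans by metis
  then show "\<exists>u v. ident s k ` e = {u, v} \<and> reach (\<lambda>e. ident s k ` e) lifted_tree u v"
    using ab(1) by auto
qed

end

theorem lemma8:
  fixes W :: "'a set" and F :: "'a set set" and r s :: "nat \<Rightarrow> 'a" and k :: nat
    and T :: "'a set set"
  assumes "simple_graph W F"
    and "r 1 \<in> W"
    and "k \<ge> 2"
    and "inj_on s {1..k}" and "s ` {1..k} \<subseteq> W - {r 1}"
    and "\<forall>e\<in>F. \<not> e \<subseteq> s ` {1..k}"
    and "inj_on r {1..k}" and "\<forall>i\<in>{2..k}. r i \<notin> W"
    and "spanning_tree W F T" and "S_wide (r 1) (s ` {1..k}) T"
  shows "\<exists>J \<subseteq> Fprime r k F.
           graphic_basis (\<lambda>e. ident r k ` e) (Fprime r k F) J \<and>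
           graphic_basis (\<lambda>e. ident s k ` e) (Fprime r k F) J \<and>
           g_map r k J = T"
proof -
  interpret wide_spanning_tree W F r s k T
    using assms by unfold_locales (auto simp: image_subset_iff)
  have "g_map r k lifted_tree = T"
    using image_ident_lifted_tree by (simp add: g_map_def f_map_def)
  then show ?thesis
    using lifted_tree_subset graphic_basis_ident_r graphic_basis_ident_s by blast
qed

end
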